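(* Let $\mathcal H$ be a separable complex Hilbert space, $C\in L(\mathcal H)$, $A=C^*C$, and $\mathcal S$ a closed subspace such that $(A,\mathcal S)$ is compatible. Then for every nonzero $x\in\mathcal H$, $$sp(C,\mathcal S,x)=\{(I-T)x:\ T\in\Pi(A,\mathcal S)\}.$$
   Context: $sp(C,\mathcal S,x)=\{y\in x+\mathcal S:\ \|Cy\|=\inf_{s\in\mathcal S}\|C(x+s)\|\}$ (the set of abstract splines). $(A,\mathcal S)$ is compatible if there exists $Q\in L(\mathcal H)$ with $Q^2=Q$, $R(Q)=\mathcal S$, $AQ=Q^*A$. $\Pi(A,\mathcal S)$ is the set of $T\in L(\mathcal H)$ with $R(T)\subseteq\mathcal S$ and $\|y-Ty\|_A\le\|y-s\|_A$ for all $y\in\mathcal H$, $s\in\mathcal S$, where $\|z\|_A=\langle Az,z\rangle^{1/2}$. *)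

theory Defs
  imports "HOL-Analysis.Analysis"
begin

text \<open>The library only has real inner product spaces, so we
introduce a class of complex Hilbert spaces: a Banach space (complete normed space,
whose real scalar multiplication is the restriction of a complex one) carrying a
complex inner product, linear in the second argument and conjugate-linear in the first,
that induces the norm.\<close>

class chilbert_space = banach +
  fixes scaleC :: "complex \<Rightarrow> 'a \<Rightarrow> 'a" (infixr "*\<^sub>C" 75)
    and cinner :: "'a \<Rightarrow> 'a \<Rightarrow> complex"
  assumes scaleC_add_right: "a *\<^sub>C (x + y) = a *\<^sub>C x + a *\<^sub>C y"
    and scaleC_add_left: "(a + b) *\<^sub>C x = a *\<^sub>C x + b *\<^sub>C x"
    and scaleC_scaleC: "a *\<^sub>C (b *\<^sub>C x) = (a * b) *\<^sub>C x"
    and scaleC_one: "1 *\<^sub>C x = x"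
    and scaleR_scaleC: "scaleR r x = complex_of_real r *\<^sub>C x"
    and cinner_add_right: "cinner x (y + z) = cinner x y + cinner x z"
    and cinner_scaleC_right: "cinner x (a *\<^sub>C y) = a * cinner x y"
    and cinner_commute: "cinner y x = cnj (cinner x y)"
    and cinner_norm: "cinner x x = complex_of_real ((norm x)\<^sup>2)"

definition cbounded_linear :: "('a::chilbert_space \<Rightarrow> 'a) \<Rightarrow> bool" where
  "cbounded_linear T \<longleftrightarrow>
     (\<forall>x y. T (x + y) = T x + T y) \<and> (\<forall>c x. T (c *\<^sub>C x) = c *\<^sub>C T x) \<and>
     (\<exists>K. \<forall>x. norm (T x) \<le> norm x * K)"

definition is_adjoint :: "('a::chilbert_space \<Rightarrow> 'a) \<Rightarrow> ('a \<Rightarrow> 'a) \<Rightarrow> bool" where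
  "is_adjoint T Ts \<longleftrightarrow> (\<forall>x y. cinner (T x) y = cinner x (Ts y))"

definition closed_csubspace :: "'a::chilbert_space set \<Rightarrow> bool" where
  "closed_csubspace S \<longleftrightarrow> 0 \<in> S \<and> (\<forall>x\<in>S. \<forall>y\<in>S. x + y \<in> S) \<and>
     (\<forall>c. \<forall>x\<in>S. c *\<^sub>C x \<in> S) \<and> closed S"

definition sp :: "('a::chilbert_space \<Rightarrow> 'a) \<Rightarrow> 'a set \<Rightarrow> 'a \<Rightarrow> 'a set" where
  "sp C S x = {y \<in> (\<lambda>s. x + s) ` S. norm (C y) = (INF s\<in>S. norm (C (x + s)))}"

definition compatible :: "('a::chilbert_space \<Rightarrow> 'a) \<Rightarrow> 'a set \<Rightarrow> bool" where
  "compatible A S \<longleftrightarrow> (\<exists>Q Qs. cbounded_linear Q \<and> Q \<circ> Q = Q \<and> range Q = S \<and>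
      is_adjoint Q Qs \<and> A \<circ> Q = Qs \<circ> A)"

text \<open>The A-seminorm, with A positive so that the inner product is real.\<close>
definition normA :: "('a::chilbert_space \<Rightarrow> 'a) \<Rightarrow> 'a \<Rightarrow> real" where
  "normA A z = sqrt (Re (cinner (A z) z))"

definition Pi_set :: "('a::chilbert_space \<Rightarrow> 'a) \<Rightarrow> 'a set \<Rightarrow> ('a \<Rightarrow> 'a) set" where
  "Pi_set A S = {T. cbounded_linear T \<and> range T \<subseteq> S \<and>
      (\<forall>y. \<forall>s\<in>S. normA A (y - T y) \<le> normA A (y - s))}"

end

theory Submission
  imports Defs
begin

text \<open>Let \<open>Q\<close> be a projection onto \<open>S\<close> with \<open>A Q = Q\<^sup>* A\<close>. Then \<open>C (y - Q y)\<close> is orthogonal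
to \<open>C S\<close> for every \<open>y\<close>, so \<open>Q y\<close> is a best \<open>A\<close>-approximation of \<open>y\<close> in \<open>S\<close>, and by Pythagoras
every spline \<open>x + s\<close> differs from \<open>x - Q x\<close> by a vector \<open>d \<in> S\<close> with \<open>C d = 0\<close>. Perturbing \<open>Q\<close>
by the rank-one operator \<open>z \<mapsto> \<langle>x, z\<rangle>/\<langle>x, x\<rangle> d\<close> does not change any of the residuals
\<open>C (y - T y)\<close>, so \<open>T = Q - \<langle>x, \<cdot>\<rangle>/\<langle>x, x\<rangle> d\<close> still lies in \<open>\<Pi>(A, S)\<close>, and \<open>x - T x = x + s\<close>.
Conversely, for \<open>T \<in> \<Pi>(A, S)\<close> the vector \<open>-T x \<in> S\<close> minimises \<open>\<parallel>C (x + s)\<parallel>\<close>.\<close>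

lemma scaleC_zero_right: "a *\<^sub>C (0::'a::chilbert_space) = 0"
  using scaleC_add_right [of a "0::'a" 0] by simp

lemma scaleC_minus_right: "a *\<^sub>C (- x::'a::chilbert_space) = - (a *\<^sub>C x)"
  using scaleC_add_right [of a x "- x"] by (simp add: scaleC_zero_right add.inverse_unique)

lemma scaleC_diff_right: "a *\<^sub>C ((x::'a::chilbert_space) - y) = a *\<^sub>C x - a *\<^sub>C y"
  using scaleC_add_right [of a x "- y"] by (simp add: scaleC_minus_right)

lemma cinner_zero_left: "cinner 0 (x::'a::chilbert_space) = 0"
  using cinner_add_right [of x 0 0] cinner_commute [of 0 x] by simp

lemma cinner_add_left: "cinner ((x::'a::chilbert_space) + y) z = cinner x z + cinner y z"
  by (metis cinner_commute cinner_add_right complex_cnj_add)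

lemma cinner_diff_right: "cinner (x::'a::chilbert_space) (y - z) = cinner x y - cinner x z"
  using cinner_add_right [of x "y - z" z] by simp

lemma cinner_scaleC_left: "cinner (a *\<^sub>C (x::'a::chilbert_space)) y = cnj a * cinner x y"
  by (metis cinner_commute cinner_scaleC_right complex_cnj_mult)

lemma pythagoras_cinner:
  fixes a b :: "'a::chilbert_space"
  assumes "cinner a b = 0"
  shows "(norm (a + b))\<^sup>2 = (norm a)\<^sup>2 + (norm b)\<^sup>2"
proof -
  have "complex_of_real ((norm (a + b))\<^sup>2) = cinner a a + cinner a b + cinner b a + cinner b b"
    by (simp add: cinner_norm [symmetric] cinner_add_left cinner_add_right del: of_real_power)
  also have "\<dots> = complex_of_real ((norm a)\<^sup>2 + (norm b)\<^sup>2)"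
    using assms cinner_commute [of b a] by (simp add: cinner_norm)
  finally show ?thesis
    by (simp only: of_real_eq_iff)
qed

lemma Cauchy_Schwarz_cinner: "cmod (cinner x z) \<le> norm x * norm (z::'a::chilbert_space)"
proof (cases "x = 0")
  case True
  then show ?thesis
    by (simp add: cinner_zero_left)
next
  case False
  define n where "n = (norm x)\<^sup>2"
  define t where "t = cinner x z / complex_of_real n"
  define p where "p = z - t *\<^sub>C x"
  have n: "n > 0"
    using False by (simp add: n_def)
  have xx: "cinner x x = complex_of_real n"
    by (simp add: n_def cinner_norm)
  have xp: "cinner (t *\<^sub>C x) p = 0"
    using n by (simp add: p_def t_def cinner_scaleC_left cinner_diff_right cinner_scaleC_right xx)
  have "complex_of_real ((cmod t)\<^sup>2 * n) = cinner (t *\<^sub>C x) (t *\<^sub>C x)"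
    using complex_norm_square [of t] by (simp add: cinner_scaleC_left cinner_scaleC_right xx mult.commute)
  then have tx: "(norm (t *\<^sub>C x))\<^sup>2 = (cmod t)\<^sup>2 * n"
    by (metis cinner_norm of_real_eq_iff)
  have "(norm z)\<^sup>2 = (cmod t)\<^sup>2 * n + (norm p)\<^sup>2"
    using pythagoras_cinner [OF xp] by (simp add: p_def tx)
  then have "(cmod t * n)\<^sup>2 \<le> (norm z)\<^sup>2 * n"
    using n by (simp add: power2_eq_square mult_right_mono)
  also have "cmod t * n = cmod (cinner x z)"
    using n by (simp add: t_def norm_divide)
  also have "(norm z)\<^sup>2 * n = (norm x * norm z)\<^sup>2"
    by (simp add: n_def power_mult_distrib)
  finally show ?thesis
    by (rule power2_le_imp_le) simp
qed

lemma norm_scaleC: "norm (a *\<^sub>C (x::'a::chilbert_space)) = cmod a * norm x"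
proof -
  have "complex_of_real ((norm (a *\<^sub>C x))\<^sup>2) = complex_of_real ((cmod a * norm x)\<^sup>2)"
    using complex_norm_square [of a]
    by (simp add: cinner_norm [symmetric] cinner_scaleC_left cinner_scaleC_right
        power_mult_distrib mult.commute del: of_real_power)
  then show ?thesis
    by (simp only: of_real_eq_iff power2_eq_iff_nonneg norm_ge_zero mult_nonneg_nonneg)
qed

lemma cbounded_linear_add: "cbounded_linear T \<Longrightarrow> T (x + y) = T x + T y"
  by (simp add: cbounded_linear_def)

lemma cbounded_linear_scaleC: "cbounded_linear T \<Longrightarrow> T (c *\<^sub>C x) = c *\<^sub>C T x"
  by (simp add: cbounded_linear_def)

lemma cbounded_linear_zero: "cbounded_linear T \<Longrightarrow> T 0 = 0"
  using cbounded_linear_add [of T 0 0] by simp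

lemma cbounded_linear_minus: "cbounded_linear T \<Longrightarrow> T (- x) = - T x"
  using cbounded_linear_add [of T x "- x"] by (simp add: cbounded_linear_zero add.inverse_unique)

lemma cbounded_linear_diff: "cbounded_linear T \<Longrightarrow> T (x - y) = T x - T y"
  using cbounded_linear_add [of T x "- y"] by (simp add: cbounded_linear_minus)

lemma cbounded_linear_minus_rank_one:
  fixes x e :: "'a::chilbert_space"
  assumes Q: "cbounded_linear Q"
  shows "cbounded_linear (\<lambda>z. Q z - cinner x z *\<^sub>C e)"
proof -
  obtain K where K: "\<And>z. norm (Q z) \<le> norm z * K"
    using Q by (auto simp: cbounded_linear_def)
  have "norm (Q z - cinner x z *\<^sub>C e) \<le> norm z * (K + norm x * norm e)" for z
  proof -
    have "norm (Q z - cinner x z *\<^sub>C e) \<le> norm (Q z) + cmod (cinner x z) * norm e"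
      by (metis norm_scaleC norm_triangle_ineq4)
    also have "\<dots> \<le> norm z * K + norm x * norm z * norm e"
      using K Cauchy_Schwarz_cinner [of x z] by (intro add_mono mult_right_mono) auto
    finally show ?thesis
      by (simp add: algebra_simps)
  qed
  moreover have "Q (c *\<^sub>C z) - cinner x (c *\<^sub>C z) *\<^sub>C e = c *\<^sub>C (Q z - cinner x z *\<^sub>C e)" for c z
    using Q by (simp add: cbounded_linear_scaleC cinner_scaleC_right scaleC_diff_right scaleC_scaleC)
  moreover have "Q (y + z) - cinner x (y + z) *\<^sub>C e
      = (Q y - cinner x y *\<^sub>C e) + (Q z - cinner x z *\<^sub>C e)" for y z
    using Q by (simp add: cbounded_linear_add cinner_add_right scaleC_add_left)
  ultimately show ?thesis
    unfolding cbounded_linear_def by blast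
qed

lemma normA_eq_norm:
  assumes "is_adjoint C Cs"
  shows "normA (Cs \<circ> C) z = norm (C z)"
proof -
  have "cinner (Cs (C z)) z = cnj (cinner (C z) (C z))"
    using assms cinner_commute [of z "Cs (C z)"] by (simp add: is_adjoint_def)
  then have "Re (cinner ((Cs \<circ> C) z) z) = (norm (C z))\<^sup>2"
    by (simp add: cinner_norm)
  then show ?thesis
    by (simp add: normA_def)
qed

lemma sp_if_Pi_set:
  assumes S: "closed_csubspace S" and C: "is_adjoint C Cs" and T: "T \<in> Pi_set (Cs \<circ> C) S"
  shows "x - T x \<in> sp C S x"
proof -
  have neg: "- v \<in> S" if "v \<in> S" for v
    using S that scaleR_scaleC [of "-1" v] by (simp add: closed_csubspace_def)
  have TxS: "- T x \<in> S"
    using T neg by (auto simp: Pi_set_def)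
  have "norm (C (x - T x)) \<le> (INF s\<in>S. norm (C (x + s)))"
  proof (rule cINF_greatest)
    show "S \<noteq> {}"
      using S by (auto simp: closed_csubspace_def)
    show "norm (C (x - T x)) \<le> norm (C (x + s))" if "s \<in> S" for s
    proof -
      have "\<forall>y. \<forall>s\<in>S. normA (Cs \<circ> C) (y - T y) \<le> normA (Cs \<circ> C) (y - s)"
        using T by (simp add: Pi_set_def)
      from this [rule_format, of "- s" x] neg [OF that] show ?thesis
        by (simp add: normA_eq_norm [OF C])
    qed
  qed
  moreover have "(INF s\<in>S. norm (C (x + s))) \<le> norm (C (x - T x))"
    using cINF_lower [of "\<lambda>s. norm (C (x + s))" S "- T x"] TxS
    by (simp add: bdd_below_def) (meson norm_ge_zero)
  moreover have "x - T x \<in> (\<lambda>s. x + s) ` S"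
    using TxS by (intro image_eqI [of _ _ "- T x"]) auto
  ultimately show ?thesis
    unfolding sp_def by auto
qed

locale A_selfadjoint_projection =
  fixes C Cs Q Qs :: "'a::chilbert_space \<Rightarrow> 'a"
  assumes C_linear: "cbounded_linear C"
    and C_adjoint: "is_adjoint C Cs"
    and Q_linear: "cbounded_linear Q"
    and Q_idem: "Q \<circ> Q = Q"
    and Q_adjoint: "is_adjoint Q Qs"
    and commute: "(Cs \<circ> C) \<circ> Q = Qs \<circ> (Cs \<circ> C)"
begin

lemma C_residual_orthogonal: "cinner (C (y - Q y)) (C (Q u)) = 0"
proof -
  have "cinner (C (y - Q y)) (C (Q u)) = cinner (y - Q y) (Qs (Cs (C u)))"
    using C_adjoint fun_cong [OF commute, of u] by (simp add: is_adjoint_def)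
  also have "\<dots> = cinner (Q (y - Q y)) (Cs (C u))"
    using Q_adjoint by (simp add: is_adjoint_def)
  also have "Q (y - Q y) = 0"
    using fun_cong [OF Q_idem, of y] by (simp add: cbounded_linear_diff [OF Q_linear])
  finally show ?thesis
    by (simp add: cinner_zero_left)
qed

lemma norm_C_residual_plus:
  "(norm (C (y - Q y + Q u)))\<^sup>2 = (norm (C (y - Q y)))\<^sup>2 + (norm (C (Q u)))\<^sup>2"
  using pythagoras_cinner [OF C_residual_orthogonal] by (simp add: cbounded_linear_add [OF C_linear])

lemma norm_C_residual_le: "norm (C (y - Q y)) \<le> norm (C (y - Q u))"
proof -
  have split: "y - Q u = y - Q y + Q (y - u)"
    by (simp add: cbounded_linear_diff [OF Q_linear])
  have "(norm (C (y - Q y)))\<^sup>2 \<le> (norm (C (y - Q u)))\<^sup>2"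
    unfolding split norm_C_residual_plus by simp
  then show ?thesis
    by (rule power2_le_imp_le) simp
qed

lemma diff_scaleC_in_range_Q: "Q z - c *\<^sub>C Q w \<in> range Q"
  using Q_linear by (metis cbounded_linear_diff cbounded_linear_scaleC rangeI)

lemma sp_residual_plus_kernelE:
  assumes "y \<in> sp C (range Q) x"
  obtains w where "y = x - Q x + Q w" and "C (Q w) = 0"
proof -
  from assms obtain u where y: "y = x + Q u"
    and y_min: "norm (C y) = (INF s\<in>range Q. norm (C (x + s)))"
    unfolding sp_def by auto
  have y_eq: "y = x - Q x + Q (x + u)"
    by (simp add: y cbounded_linear_add [OF Q_linear])
  have "norm (C y) \<le> norm (C (x + Q (- x)))"
    unfolding y_min by (intro cINF_lower bdd_belowI [of _ 0]) auto
  then have "(norm (C y))\<^sup>2 \<le> (norm (C (x - Q x)))\<^sup>2"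
    by (simp add: cbounded_linear_minus [OF Q_linear] power_mono)
  moreover have "(norm (C y))\<^sup>2 = (norm (C (x - Q x)))\<^sup>2 + (norm (C (Q (x + u))))\<^sup>2"
    using norm_C_residual_plus [of x "x + u"] y_eq by simp
  ultimately have "C (Q (x + u)) = 0"
    by simp
  with y_eq show thesis
    by (rule that)
qed

lemma rank_one_perturbation_in_Pi_set:
  assumes "e \<in> range Q" and "C e = 0"
  shows "(\<lambda>z. Q z - cinner x z *\<^sub>C e) \<in> Pi_set (Cs \<circ> C) (range Q)"
proof -
  have "C (y - (Q y - cinner x y *\<^sub>C e)) = C (y - Q y)" for y
  proof -
    have split: "y - (Q y - cinner x y *\<^sub>C e) = (y - Q y) + cinner x y *\<^sub>C e"
      by simp
    show ?thesis
      unfolding split using assms(2) C_linear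
      by (simp add: cbounded_linear_add cbounded_linear_scaleC scaleC_zero_right)
  qed
  then have "normA (Cs \<circ> C) (y - (Q y - cinner x y *\<^sub>C e)) \<le> normA (Cs \<circ> C) (y - Q u)" for y u
    using norm_C_residual_le by (simp add: normA_eq_norm [OF C_adjoint])
  moreover have "Q z - cinner x z *\<^sub>C e \<in> range Q" for z
    using assms(1) diff_scaleC_in_range_Q by auto
  ultimately show ?thesis
    unfolding Pi_set_def using cbounded_linear_minus_rank_one [OF Q_linear] by auto
qed

end

theorem mainTheorem11:
  fixes C Cs :: "'a::chilbert_space \<Rightarrow> 'a" and S :: "'a set" and x :: 'a
  assumes "separable_space (euclidean :: 'a topology)"
    and "cbounded_linear C"
    and "is_adjoint C Cs"
    and "closed_csubspace S"
    and "compatible (Cs \<circ> C) S"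
    and "x \<noteq> 0"
  shows "sp C S x = {x - T x | T. T \<in> Pi_set (Cs \<circ> C) S}"
proof -
  obtain Q Qs where Q: "A_selfadjoint_projection C Cs Q Qs" and S: "S = range Q"
    using assms(2,3,5) unfolding compatible_def A_selfadjoint_projection_def by auto
  interpret A_selfadjoint_projection C Cs Q Qs
    by (fact Q)
  have "y \<in> {x - T x | T. T \<in> Pi_set (Cs \<circ> C) S}" if "y \<in> sp C S x" for y
  proof -
    obtain w where y: "y = x - Q x + Q w" and Cw: "C (Q w) = 0"
      using sp_residual_plus_kernelE \<open>y \<in> sp C S x\<close> unfolding S by blast
    define e where "e = Q (inverse (cinner x x) *\<^sub>C w)"
    have "C e = 0"
      by (simp add: e_def cbounded_linear_scaleC [OF Q_linear] cbounded_linear_scaleC [OF C_linear]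
          Cw scaleC_zero_right)
    then have T: "(\<lambda>z. Q z - cinner x z *\<^sub>C e) \<in> Pi_set (Cs \<circ> C) S"
      unfolding S e_def by (rule rank_one_perturbation_in_Pi_set [OF rangeI])
    have "cinner x x \<noteq> 0"
      using assms(6) by (simp add: cinner_norm)
    then have "y = x - (Q x - cinner x x *\<^sub>C e)"
      by (simp add: y e_def cbounded_linear_scaleC [OF Q_linear] scaleC_scaleC scaleC_one)
    with T show ?thesis
      by (intro CollectI exI [of _ "\<lambda>z. Q z - cinner x z *\<^sub>C e"]) simp
  qed
  with sp_if_Pi_set [OF assms(4,3)] show ?thesis
    by blast
qed

end
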